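(* Let $\{a_n\}_{n\ge1}$ and $\{b_n\}_{n\ge1}$ be sequences of complex numbers with $a_n\ne0$ for all $n$, and let $w_n(z)$ ($n\ge0$) be the $n$-th approximant of the continued fraction $$\cfrac{a_1}{z+b_1-\cfrac{a_2}{z+b_2-\cfrac{a_3}{z+b_3-\cdots}}},$$ i.e. $w_0=0$ and $w_n(z)=\cfrac{a_1}{z+b_1-\cfrac{a_2}{\ddots-\cfrac{a_n}{z+b_n}}}$. Then: (1) For every $n\ge0$, $w_n(z)$ is a rational function of degree $n$; for $n\ge1$, $w_n(z)\sim\frac{a_1}{z}$ $(z\to\infty)$ and $w_n(z)-w_{n-1}(z)\sim\frac{a_1a_2\cdots a_n}{z^{2n-1}}$ $(z\to\infty)$. In particular $\{w_n(z)-w_{n-1}(z)\}_{n\ge1}$ is an asymptotic sequence at $\infty$. (2) Let $f(z)$ be a complex-valued function defined on an unbounded subset $\mathfrak X$ of $\mathbb C\cup\{\infty\}$. The following are equivalent: (a) $f(z)\sim \cfrac{a_1}{z+b_1-\cfrac{a_2}{z+b_2-\cfrac{a_3}{z+b_3-\cdots}}}$ $(z\to\infty)_{\mathfrak X}$ (asymptotic continued fraction expansion); (b) for every positive integer $n$ one has $f(z)=\cfrac{a_1}{z+b_1-\cfrac{a_2}{\ddots -\cfrac{a_n}{z+b_n-f_n(z)}}}$ for some function $f_n(z)$ with $f_n(z)\sim\frac{a_{n+1}}{z}$ $(z\to\infty)_{\mathfrak X}$; (c) $f(z)-w_n(z)\sim\frac{a_1a_2\cdots a_{n+1}}{z^{2n+1}}$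 $(z\to\infty)_{\mathfrak X}$ for all $n\ge0$; (d) $f(z)-w_n(z)=O(z^{-(2n+1)})$ $(z\to\infty)_{\mathfrak X}$ for all $n\ge0$; (e) $f(z)-w_n(z)=O(z^{-(2n+1)})$ $(z\to\infty)_{\mathfrak X}$ for infinitely many $n\ge0$; (f) for every $n\ge0$, $w_n(z)$ is the unique rational function $w(z)\in\mathbb C(z)$ of degree at most $n$ such that $f(z)-w(z)=O(z^{-(2n+1)})$ $(z\to\infty)_{\mathfrak X}$; (g) for every $n\ge1$, $w_n(z)$ is the unique Padé approximant of $f(z)$ over $\mathfrak X$ at $z=\infty$ of order $[n-1,n]$. (3) If the equivalent conditions in (2) hold, then the best rational approximations of $f(z)$ over $\mathfrak X$ are precisely the approximants $w_n(z)$, $n\ge0$.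
   Context: All asymptotic relations are as $z\to\infty$ within $\mathfrak X$: $f=O(g)$ if $|f|\le M|g|$ on $U\cap\mathfrak X$ for some punctured neighbourhood $U$ of $\infty$ and some $M>0$; $f=o(g)$ if this holds for every $M>0$; $f\sim g$ if $f-g=o(g)$ and $g-f=o(f)$. A sequence $\{\varphi_n\}$ is an asymptotic sequence if $\varphi_{n+1}=o(\varphi_n)$ for all $n$. Asymptotic continued fraction expansion: $f\sim K$ means $\{w_n-w_{n-1}\}_{n\ge1}$ is an asymptotic sequence and $f-w_n=O(w_{n+1}-w_n)$ for all $n\ge0$ (equivalently $f\sim\sum_{n\ge1}(w_n-w_{n-1})$ as an asymptotic expansion of infinite order). The degree of a rational function is the maximum of the degrees of numerator and denominator in lowest terms. A rational function $w\in\mathbb C(z)$ is a best rational approximation of $f$ over $\mathfrak X$ if $w$ is the unique $v\in\mathbb C(z)$ of degree at most $\deg w$ with $f-v=O(f-w)$ $(z\to\infty)_{\mathfrak X}$. The Padé approximant of $f$ over $\mathfrak X$ at $\infty$ of order $[n-1,n]$ is the unique rational function $g(z)/h(z)$ with $g$ a polynomial of degree $\le n-1$ and $h$ a nonzero polynomial of degree $\le n$ such that $f(z)-g(z)/h(z)=O(z^{-(2n+1)})$ $(z\to\infty)_{\mathfrak X}$. *)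

theory Defs
  imports "HOL-Analysis.Analysis" "HOL-Library.Landau_Symbols"
          "HOL-Computational_Algebra.Polynomial_Factorial"
          "HOL-Computational_Algebra.Normalized_Fraction" "HOL-Computational_Algebra.Field_as_Ring"
begin

type_synonym ratfun = "complex poly fract"

definition rf_degree :: "ratfun \<Rightarrow> nat" where
  "rf_degree w = (case quot_of_fract w of (p, q) \<Rightarrow> max (degree p) (degree q))"

definition rf_eval :: "ratfun \<Rightarrow> complex \<Rightarrow> complex" where
  "rf_eval w z = (case quot_of_fract w of (p, q) \<Rightarrow> poly p z / poly q z)"

definition rf_z :: ratfun where "rf_z = to_fract [:0, 1:]"
definition rf_const :: "complex \<Rightarrow> ratfun" where "rf_const c = to_fract [:c:]"

text \<open>cf_rf a b n t = a1/(z+b1 - a2/( ... - an/(z+bn - t))) in C(z); cf_rf a b 0 t = t.\<close>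
fun cf_rf :: "(nat \<Rightarrow> complex) \<Rightarrow> (nat \<Rightarrow> complex) \<Rightarrow> nat \<Rightarrow> ratfun \<Rightarrow> ratfun" where
  "cf_rf a b 0 t = t"
| "cf_rf a b (Suc n) t =
     cf_rf a b n (rf_const (a (Suc n)) / (rf_z + rf_const (b (Suc n)) - t))"

definition approximant :: "(nat \<Rightarrow> complex) \<Rightarrow> (nat \<Rightarrow> complex) \<Rightarrow> nat \<Rightarrow> ratfun" where
  "approximant a b n = cf_rf a b n 0"

fun cf_fun :: "(nat \<Rightarrow> complex) \<Rightarrow> (nat \<Rightarrow> complex) \<Rightarrow> nat \<Rightarrow> complex \<Rightarrow> complex \<Rightarrow> complex" where
  "cf_fun a b 0 t z = t"
| "cf_fun a b (Suc n) t z = cf_fun a b n (a (Suc n) / (z + b (Suc n) - t)) z"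

definition at_inf_within :: "complex set \<Rightarrow> complex filter" where
  "at_inf_within X = inf at_infinity (principal X)"

definition asymptotic_sequence :: "complex filter \<Rightarrow> (nat \<Rightarrow> complex \<Rightarrow> complex) \<Rightarrow> bool" where
  "asymptotic_sequence F \<phi> \<longleftrightarrow> (\<forall>n. \<phi> (Suc n) \<in> o[F](\<phi> n))"

definition acf_expansion :: "complex filter \<Rightarrow> (complex \<Rightarrow> complex)
     \<Rightarrow> (nat \<Rightarrow> complex) \<Rightarrow> (nat \<Rightarrow> complex) \<Rightarrow> bool" where
  "acf_expansion F f a b \<longleftrightarrow>
     asymptotic_sequence F (\<lambda>n z. rf_eval (approximant a b (Suc n)) z - rf_eval (approximant a b n) z)
   \<and> (\<forall>n. (\<lambda>z. f z - rf_eval (approximant a b n) z)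
            \<in> O[F](\<lambda>z. rf_eval (approximant a b (Suc n)) z - rf_eval (approximant a b n) z))"

definition best_rat_approx :: "complex filter \<Rightarrow> (complex \<Rightarrow> complex) \<Rightarrow> ratfun \<Rightarrow> bool" where
  "best_rat_approx F f w \<longleftrightarrow>
     (\<forall>v. (rf_degree v \<le> rf_degree w \<and>
           (\<lambda>z. f z - rf_eval v z) \<in> O[F](\<lambda>z. f z - rf_eval w z)) \<longleftrightarrow> v = w)"

text \<open>Rational functions g/h (g of degree \<le> n-1, h \<noteq> 0 of degree \<le> n) with
  f - g/h = O(z^-(2n+1)); the Pade approximant of order [n-1,n] is the unique such one.\<close>
definition pade_candidates :: "complex filter \<Rightarrow> (complex \<Rightarrow> complex) \<Rightarrow> nat \<Rightarrow> ratfun set" where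
  "pade_candidates F f n = {to_fract g / to_fract h | g h.
      h \<noteq> 0 \<and> degree g \<le> n - 1 \<and> degree h \<le> n \<and>
      (\<lambda>z. f z - poly g z / poly h z) \<in> O[F](\<lambda>z. 1 / z ^ (2*n+1))}"

end

theory Submission
  imports Defs
begin

text \<open>
  Write w_n = P_n / Q_n with P_n, Q_n given by the three-term recurrence of the continued
  fraction. Then Q_n is monic of degree n, P_n has degree n - 1 and leading coefficient a_1,
  and the determinant identity P_(n+1) Q_n - P_n Q_(n+1) = a_1 ... a_(n+1) gives
  w_(n+1) - w_n = a_1 ... a_(n+1) / (Q_(n+1) Q_n), which is asymptotic to
  a_1 ... a_(n+1) / z^(2n+1). All conditions of (2) are shown equivalent to (d): an error
  O(z^-(2n+3)) at level n+1 forces the error at level n to be asymptotic to w_(n+1) - w_n,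
  which yields (a), (c) and (e); the tail f_n of (b) is obtained by inverting the Moebius map
  t |-> (P_n - t P_(n-1)) / (Q_n - t Q_(n-1)). Uniqueness in (f), (g) and (3) rests on a
  single fact: two distinct rational functions whose denominators have total degree below k
  differ by more than O(z^-k), since their difference is R / S with R nonzero and
  deg S < k.
\<close>

section \<open>Numerators and denominators of the approximants\<close>

fun cf_num :: "(nat \<Rightarrow> complex) \<Rightarrow> (nat \<Rightarrow> complex) \<Rightarrow> nat \<Rightarrow> complex poly" where
  "cf_num a b 0 = 0"
| "cf_num a b (Suc 0) = [:a 1:]"
| "cf_num a b (Suc (Suc n)) =
     [:b (Suc (Suc n)), 1:] * cf_num a b (Suc n) - smult (a (Suc (Suc n))) (cf_num a b n)"

fun cf_den :: "(nat \<Rightarrow> complex) \<Rightarrow> (nat \<Rightarrow> complex) \<Rightarrow> nat \<Rightarrow> complex poly" where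
  "cf_den a b 0 = 1"
| "cf_den a b (Suc 0) = [:b 1, 1:]"
| "cf_den a b (Suc (Suc n)) =
     [:b (Suc (Suc n)), 1:] * cf_den a b (Suc n) - smult (a (Suc (Suc n))) (cf_den a b n)"

lemma degree_cf_den_le: "degree (cf_den a b n) \<le> n"
  by (induction a b n rule: cf_den.induct)
     (auto intro!: degree_diff_le degree_add_le order.trans[OF degree_pCons_le]
        order.trans[OF degree_smult_le])

lemma coeff_cf_den_self [simp]: "coeff (cf_den a b n) n = 1"
proof (induction a b n rule: cf_den.induct)
  case (3 a b n)
  have "coeff (cf_den a b (Suc n)) (Suc (Suc n)) = 0" "coeff (cf_den a b n) (Suc (Suc n)) = 0"
    using degree_cf_den_le[of a b "Suc n"] degree_cf_den_le[of a b n] by (simp_all add: coeff_eq_0)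
  with 3 show ?case by simp
qed auto

lemma degree_cf_den [simp]: "degree (cf_den a b n) = n"
  using degree_cf_den_le[of a b n] le_degree[of "cf_den a b n" n] coeff_cf_den_self[of a b n]
  by simp

lemma lead_coeff_cf_den [simp]: "lead_coeff (cf_den a b n) = 1"
  by simp

lemma cf_den_nonzero [simp]: "cf_den a b n \<noteq> 0"
  using lead_coeff_cf_den[of a b n] by (metis leading_coeff_0_iff zero_neq_one)

lemma degree_cf_num_le: "degree (cf_num a b n) \<le> n - 1"
  by (induction a b n rule: cf_num.induct)
     (auto intro!: degree_diff_le degree_add_le order.trans[OF degree_pCons_le]
        order.trans[OF degree_smult_le])

lemma coeff_cf_num: "n \<ge> 1 \<Longrightarrow> coeff (cf_num a b n) (n - 1) = a 1"
proof (induction a b n rule: cf_num.induct)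
  case (3 a b n)
  have "coeff (cf_num a b (Suc n)) (Suc n) = 0" "coeff (cf_num a b n) (Suc n) = 0"
    using degree_cf_num_le[of a b "Suc n"] degree_cf_num_le[of a b n] by (simp_all add: coeff_eq_0)
  with 3 show ?case by simp
qed auto

lemma degree_cf_num:
  assumes "a 1 \<noteq> 0" "n \<ge> 1"
  shows "degree (cf_num a b n) = n - 1"
  using degree_cf_num_le[of a b n] le_degree[of "cf_num a b n" "n - 1"]
    coeff_cf_num[OF assms(2)] assms(1)
  by simp

lemma cf_num_den_det:
  "cf_num a b (Suc n) * cf_den a b n - cf_num a b n * cf_den a b (Suc n) = [:\<Prod>k=1..Suc n. a k:]"
proof (induction n)
  case (Suc n)
  have "cf_num a b (Suc (Suc n)) * cf_den a b (Suc n) - cf_num a b (Suc n) * cf_den a b (Suc (Suc n))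
     = smult (a (Suc (Suc n))) (cf_num a b (Suc n) * cf_den a b n - cf_num a b n * cf_den a b (Suc n))"
    by (simp add: algebra_simps smult_diff_right)
  with Suc show ?case by (simp add: prod.nat_ivl_Suc')
qed simp

lemma poly_cf_num_den_det:
  "poly (cf_num a b (Suc n)) z * poly (cf_den a b n) z
     - poly (cf_num a b n) z * poly (cf_den a b (Suc n)) z
   = (\<Prod>k=1..Suc n. a k)"
  using arg_cong[OF cf_num_den_det[of a b n], of "\<lambda>p. poly p z"] by simp

lemma coprime_cf_num_den:
  assumes "\<And>k. k \<ge> 1 \<Longrightarrow> a k \<noteq> 0"
  shows "coprime (cf_num a b n) (cf_den a b n)"
proof (cases n)
  case (Suc m)
  have "(\<Prod>k=1..Suc m. a k) \<noteq> 0"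
    using assms by (simp add: prod_zero_iff)
  then have unit: "is_unit [:\<Prod>k=1..Suc m. a k:]"
    unfolding is_unit_const_poly_iff dvd_field_iff by blast
  show ?thesis
  proof (rule coprimeI)
    fix c assume "c dvd cf_num a b n" "c dvd cf_den a b n"
    then have "c dvd cf_num a b (Suc m) * cf_den a b m - cf_num a b m * cf_den a b (Suc m)"
      unfolding Suc by (intro dvd_diff dvd_mult2 dvd_mult)
    then show "is_unit c"
      unfolding cf_num_den_det using unit by (rule dvd_unit_imp_unit)
  qed
qed simp

lemma cf_rf_step:
  assumes "v \<noteq> 0"
  shows "rf_const c / (rf_z + rf_const d - to_fract u / to_fract v)
     = to_fract (smult c v) / to_fract ([:d, 1:] * v - u)"
proof -
  have frac: "x / (y - u' / v') = x * v' / (y * v' - u')" if "v' \<noteq> 0" for x y u' v' :: ratfun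
    using that by (simp add: field_simps)
  have "rf_z + rf_const d = to_fract [:d, 1:]"
    unfolding rf_z_def rf_const_def to_fract_add [symmetric] by simp
  moreover have "smult c v = [:c:] * v"
    by simp
  ultimately show ?thesis
    using assms unfolding rf_const_def by (simp add: frac del: mult_pCons_left)
qed

lemma degree_linear_mult_diff:
  fixes u v :: "'a::idom poly"
  assumes "v \<noteq> 0" "degree u \<le> degree v"
  shows "degree ([:d, 1:] * v - u) = Suc (degree v)"
proof -
  have "degree ([:d, 1:] * v) = degree [:d, 1:] + degree v"
    by (rule degree_mult_eq) (use assms in auto)
  with assms(2) show ?thesis
    using degree_add_eq_left[of "-u" "[:d, 1:] * v"] by simp
qed

lemma cf_rf_tail:
  assumes "v \<noteq> 0" "degree u \<le> degree v"
  shows "cf_rf a b (Suc n) (to_fract u / to_fract v)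
     = to_fract (cf_num a b (Suc n) * v - u * cf_num a b n)
       / to_fract (cf_den a b (Suc n) * v - u * cf_den a b n)"
  using assms
proof (induction n arbitrary: u v)
  case 0
  then show ?case by (simp add: cf_rf_step)
next
  case (Suc n)
  define u' where "u' = smult (a (Suc (Suc n))) v"
  define v' where "v' = [:b (Suc (Suc n)), 1:] * v - u"
  have "degree v' = Suc (degree v)"
    unfolding v'_def using Suc.prems by (rule degree_linear_mult_diff)
  then have "v' \<noteq> 0" "degree u' \<le> degree v'"
    unfolding u'_def by auto
  have "cf_rf a b (Suc (Suc n)) (to_fract u / to_fract v)
      = cf_rf a b (Suc n) (to_fract u' / to_fract v')"
    using cf_rf_step[OF Suc.prems(1)] unfolding u'_def v'_def by simp
  also have "\<dots> = to_fract (cf_num a b (Suc n) * v' - u' * cf_num a b n)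
      / to_fract (cf_den a b (Suc n) * v' - u' * cf_den a b n)"
    by (rule Suc.IH) fact+
  also have "cf_num a b (Suc n) * v' - u' * cf_num a b n
      = cf_num a b (Suc (Suc n)) * v - u * cf_num a b (Suc n)"
    unfolding u'_def v'_def by (simp add: algebra_simps)
  also have "cf_den a b (Suc n) * v' - u' * cf_den a b n
      = cf_den a b (Suc (Suc n)) * v - u * cf_den a b (Suc n)"
    unfolding u'_def v'_def by (simp add: algebra_simps)
  finally show ?case .
qed

lemma approximant_eq_fract: "approximant a b n = to_fract (cf_num a b n) / to_fract (cf_den a b n)"
proof (cases n)
  case (Suc m)
  have "approximant a b n = cf_rf a b (Suc m) (to_fract 0 / to_fract 1)"
    by (simp add: approximant_def Suc)
  also have "\<dots> = to_fract (cf_num a b n) / to_fract (cf_den a b n)"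
    by (subst cf_rf_tail) (auto simp: Suc)
  finally show ?thesis .
qed (simp add: approximant_def)

lemma moebius_diff:
  fixes p q p' q' t :: "'a::field"
  assumes "q \<noteq> 0" "q - t * q' \<noteq> 0"
  shows "(p - t * p') / (q - t * q') - p / q = t * (p * q' - p' * q) / (q * (q - t * q'))"
  using assms by (simp add: field_simps)

lemma moebius_inverse:
  fixes p q p' q' f :: "'a::field"
  assumes "p' - f * q' \<noteq> 0" "p * q' - p' * q \<noteq> 0"
  defines "t \<equiv> (p - f * q) / (p' - f * q')"
  shows "(p - t * p') / (q - t * q') = f"
proof -
  have "p - t * p' = f * ((p * q' - p' * q) / (f * q' - p'))"
    "q - t * q' = (p * q' - p' * q) / (f * q' - p')"
    using assms(1) unfolding t_def by (simp_all add: field_simps)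
  with assms show ?thesis
    by simp
qed

text \<open>
  Pointwise, the tail formula fails where an intermediate denominator vanishes (x / 0 = 0);
  along a filter towards infinity with a tail tending to 0 these denominators are eventually
  nonzero.
\<close>

lemma eventually_cf_fun_eq:
  fixes t :: "complex \<Rightarrow> complex"
  assumes "F \<le> at_infinity" "(t \<longlongrightarrow> 0) F"
  shows "\<forall>\<^sub>F z in F. cf_fun a b (Suc n) (t z) z
    = (poly (cf_num a b (Suc n)) z - t z * poly (cf_num a b n) z)
      / (poly (cf_den a b (Suc n)) z - t z * poly (cf_den a b n) z)"
  using assms(2)
proof (induction n arbitrary: t)
  case 0
  show ?case
    by (simp add: algebra_simps)
next
  case (Suc n)
  define c where "c = a (Suc (Suc n))"
  define d where "d = b (Suc (Suc n))"
  have "filterlim (\<lambda>z. z + (d - t z)) at_infinity F"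
    using filterlim_mono[OF filterlim_ident assms(1) order_refl]
      tendsto_diff[OF tendsto_const Suc.prems]
    by (rule tendsto_add_filterlim_at_infinity')
  then have lim: "filterlim (\<lambda>z. z + d - t z) at_infinity F"
    by (simp add: add_diff_eq)
  then have "((\<lambda>z. c / (z + d - t z)) \<longlongrightarrow> 0) F"
    by (rule tendsto_divide_0[OF tendsto_const])
  from Suc.IH[OF this] filterlim_at_infinity_imp_eventually_ne[OF lim, of 0] show ?case
  proof eventually_elim
    case (elim z)
    have frac: "(x - c / D * y) / (u - c / D * w) = (x * D - c * y) / (u * D - c * w)"
      if "D \<noteq> 0" for x y u w D :: complex
    proof -
      have "x - c / D * y = (x * D - c * y) / D" "u - c / D * w = (u * D - c * w) / D"
        using that by (simp_all add: field_simps)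
      with that show ?thesis
        by simp
    qed
    from elim(1) show ?case
      using frac[OF elim(2), of "poly (cf_num a b (Suc n)) z" "poly (cf_num a b n) z"
          "poly (cf_den a b (Suc n)) z" "poly (cf_den a b n) z"]
      by (simp add: c_def d_def algebra_simps)
  qed
qed

section \<open>Polynomials and rational functions at infinity\<close>

lemma tendsto_divide_power_0:
  fixes c :: "'a::real_normed_field"
  assumes "k > 0"
  shows "((\<lambda>z. c / z ^ k) \<longlongrightarrow> 0) at_infinity"
  using assms
  by (auto intro!: tendsto_divide_0[OF tendsto_const] filterlim_power_at_infinity filterlim_ident)

lemma poly_asymp_equiv_at_infinity:
  fixes p :: "'a::real_normed_field poly"
  assumes "p \<noteq> 0"
  shows "poly p \<sim>[at_infinity] (\<lambda>z. lead_coeff p * z ^ degree p)"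
proof -
  have "((\<lambda>z. poly (reflect_poly p) (inverse z)) \<longlongrightarrow> poly (reflect_poly p) 0) at_infinity"
    by (intro tendsto_poly tendsto_inverse_0)
  moreover have "\<forall>\<^sub>F z in at_infinity. poly (reflect_poly p) (inverse z) = poly p z / z ^ degree p"
    using eventually_not_equal_at_infinity[of 0]
    by eventually_elim (simp add: poly_reflect_poly_nz divide_inverse power_inverse mult.commute)
  ultimately have "((\<lambda>z. poly p z / z ^ degree p) \<longlongrightarrow> lead_coeff p) at_infinity"
    by (simp add: poly_0_coeff_0 tendsto_cong)
  then show ?thesis
    using assms by (intro asymp_equivI'_const) simp_all
qed

lemma eventually_poly_nonzero_at_infinity:
  fixes p :: "'a::real_normed_field poly"
  assumes "p \<noteq> 0"
  shows "\<forall>\<^sub>F z in at_infinity. poly p z \<noteq> 0"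
  using asymp_equiv_eventually_zeros[OF poly_asymp_equiv_at_infinity[OF assms]]
    eventually_not_equal_at_infinity[of 0]
  by eventually_elim (use assms in simp)

lemma poly_quotient_tendsto_0:
  fixes p q :: "'a::real_normed_field poly"
  assumes "degree p < degree q"
  shows "((\<lambda>z. poly p z / poly q z) \<longlongrightarrow> 0) at_infinity"
proof (cases "p = 0")
  case False
  have "q \<noteq> 0"
    using assms by auto
  then have "(\<lambda>z. poly p z / poly q z) \<sim>[at_infinity]
      (\<lambda>z. (lead_coeff p * z ^ degree p) / (lead_coeff q * z ^ degree q))"
    using False by (intro asymp_equiv_divide poly_asymp_equiv_at_infinity)
  also have "\<dots> \<sim>[at_infinity] (\<lambda>z. (lead_coeff p / lead_coeff q) / z ^ (degree q - degree p))"
    using eventually_not_equal_at_infinity[of 0]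
  proof (rule asymp_equiv_refl_ev[OF eventually_mono])
    fix z :: 'a assume "z \<noteq> 0"
    have "z ^ degree q = z ^ (degree q - degree p) * z ^ degree p"
      using assms by (simp flip: power_add)
    with \<open>z \<noteq> 0\<close> show "lead_coeff p * z ^ degree p / (lead_coeff q * z ^ degree q)
        = (lead_coeff p / lead_coeff q) / z ^ (degree q - degree p)"
      by simp
  qed
  finally have "(\<lambda>z. poly p z / poly q z) \<sim>[at_infinity]
      (\<lambda>z. (lead_coeff p / lead_coeff q) / z ^ (degree q - degree p))" .
  moreover have "((\<lambda>z. (lead_coeff p / lead_coeff q) / z ^ (degree q - degree p)) \<longlongrightarrow> 0) at_infinity"
    using assms by (intro tendsto_divide_power_0) simp
  ultimately show ?thesis
    by (rule asymp_equiv_tendsto_transfer[OF asymp_equiv_symI])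
qed simp

lemma inverse_power_smallo_poly_quotient:
  fixes R S :: "'a::real_normed_field poly"
  assumes "R \<noteq> 0" "S \<noteq> 0" "degree S < k + degree R"
  shows "(\<lambda>z. 1 / z ^ k) \<in> o[at_infinity](\<lambda>z. poly R z / poly S z)"
proof (rule smalloI_tendsto)
  have "degree S < degree (monom 1 k * R)"
    using assms by (simp add: degree_mult_eq degree_monom_eq)
  then have "((\<lambda>z. poly S z / poly (monom 1 k * R) z) \<longlongrightarrow> 0) at_infinity"
    by (rule poly_quotient_tendsto_0)
  then show "((\<lambda>z. (1 / z ^ k) / (poly R z / poly S z)) \<longlongrightarrow> 0) at_infinity"
    by (simp add: poly_monom field_simps)
  show "\<forall>\<^sub>F z in at_infinity. poly R z / poly S z \<noteq> 0"
    using eventually_poly_nonzero_at_infinity[OF assms(1)]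
      eventually_poly_nonzero_at_infinity[OF assms(2)]
    by eventually_elim simp
qed

lemma divide_power_smallo:
  fixes c c' :: "'a::real_normed_field"
  assumes "k < m" "c' \<noteq> 0"
  shows "(\<lambda>z. c / z ^ m) \<in> o[at_infinity](\<lambda>z. c' / z ^ k)"
proof (rule smalloI_tendsto)
  have "\<forall>\<^sub>F z in at_infinity. (c / c') / z ^ (m - k) = (c / z ^ m) / (c' / z ^ k)"
    using eventually_not_equal_at_infinity[of 0]
  proof eventually_elim
    case (elim z)
    have "z ^ m = z ^ (m - k) * z ^ k"
      using assms(1) by (simp flip: power_add)
    with elim assms(2) show ?case
      by (simp add: field_simps)
  qed
  moreover have "((\<lambda>z. (c / c') / z ^ (m - k)) \<longlongrightarrow> 0) at_infinity"
    using assms(1) by (intro tendsto_divide_power_0) simp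
  ultimately show "((\<lambda>z. (c / z ^ m) / (c' / z ^ k)) \<longlongrightarrow> 0) at_infinity"
    by (rule Lim_transform_eventually[rotated])
  show "\<forall>\<^sub>F z in at_infinity. c' / z ^ k \<noteq> 0"
    using eventually_not_equal_at_infinity[of 0] by eventually_elim (use assms in simp)
qed

lemma divide_power_bigo:
  fixes c :: "'a::real_normed_field"
  assumes "k \<le> m"
  shows "(\<lambda>z. c / z ^ m) \<in> O[at_infinity](\<lambda>z. 1 / z ^ k)"
proof (rule bigoI)
  have "\<forall>\<^sub>F z in at_infinity. norm (z :: 'a) \<ge> 1"
    by (auto simp: eventually_at_infinity)
  then show "\<forall>\<^sub>F z in at_infinity. norm (c / z ^ m) \<le> norm c * norm (1 / z ^ k)"
  proof eventually_elim
    case (elim z)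
    then have "norm z ^ k \<le> norm z ^ m" "norm z ^ k > 0"
      using assms by (simp_all add: power_increasing order.strict_trans2[OF zero_less_one])
    then have "norm c / norm z ^ m \<le> norm c / norm z ^ k"
      by (intro divide_left_mono) auto
    then show ?case
      by (simp add: norm_divide norm_power)
  qed
qed

lemma asymp_equiv_filter_mono: "F \<le> G \<Longrightarrow> f \<sim>[G] g \<Longrightarrow> f \<sim>[F] g"
  unfolding asymp_equiv_def by (rule tendsto_mono)

lemma at_inf_within_le_at_infinity: "at_inf_within X \<le> at_infinity"
  by (simp add: at_inf_within_def)

lemma at_inf_within_nontrivial:
  assumes "\<not> bounded X"
  shows "at_inf_within X \<noteq> bot"
proof
  assume "at_inf_within X = bot"
  then obtain r where "\<And>x. norm x \<ge> r \<Longrightarrow> x \<in> X \<Longrightarrow> False"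
    unfolding at_inf_within_def eventually_inf_principal eventually_at_infinity trivial_limit_def
    by blast
  then have "X \<subseteq> cball 0 r"
    by (force simp: dist_norm)
  with assms show False
    using bounded_cball bounded_subset by blast
qed

lemma poly_cf_den_asymp_equiv: "poly (cf_den a b n) \<sim>[at_infinity] (\<lambda>z. z ^ n)"
  using poly_asymp_equiv_at_infinity[OF cf_den_nonzero[of a b n]] by simp

lemma rf_eval_quot_of_fract:
  "rf_eval v z = poly (fst (quot_of_fract v)) z / poly (snd (quot_of_fract v)) z"
  by (simp add: rf_eval_def case_prod_unfold)

lemma degree_snd_quot_of_fract_le: "degree (snd (quot_of_fract v)) \<le> rf_degree v"
  by (simp add: rf_degree_def case_prod_unfold)

lemma inverse_power_smallo_rf_eval_diff:
  assumes "v \<noteq> v'" "rf_degree v + rf_degree v' < k"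
  shows "(\<lambda>z. 1 / z ^ k) \<in> o[at_infinity](\<lambda>z. rf_eval v z - rf_eval v' z)"
proof -
  obtain p q where v: "quot_of_fract v = (p, q)"
    by (cases "quot_of_fract v")
  obtain p' q' where v': "quot_of_fract v' = (p', q')"
    by (cases "quot_of_fract v'")
  have "q \<noteq> 0" "q' \<noteq> 0"
    using snd_quot_of_fract_nonzero[of v] snd_quot_of_fract_nonzero[of v'] by (simp_all add: v v')
  define R where "R = p * q' - p' * q"
  define S where "S = q * q'"
  have "R \<noteq> 0"
  proof
    assume "R = 0"
    then have "Fract p q = Fract p' q'"
      using \<open>q \<noteq> 0\<close> \<open>q' \<noteq> 0\<close> by (simp add: R_def eq_fract)
    then show False
      using assms(1) Fract_quot_of_fract[of v] Fract_quot_of_fract[of v'] by (simp add: v v')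
  qed
  have "degree S \<le> degree q + degree q'"
    unfolding S_def by (rule degree_mult_le)
  also have "\<dots> < k"
    using assms(2) degree_snd_quot_of_fract_le[of v] degree_snd_quot_of_fract_le[of v']
    by (simp add: v v')
  finally have "(\<lambda>z. 1 / z ^ k) \<in> o[at_infinity](\<lambda>z. poly R z / poly S z)"
    using \<open>R \<noteq> 0\<close> \<open>q \<noteq> 0\<close> \<open>q' \<noteq> 0\<close>
    by (intro inverse_power_smallo_poly_quotient) (simp_all add: S_def)
  moreover have "\<forall>\<^sub>F z in at_infinity. rf_eval v z - rf_eval v' z = poly R z / poly S z"
    using eventually_poly_nonzero_at_infinity[OF \<open>q \<noteq> 0\<close>]
      eventually_poly_nonzero_at_infinity[OF \<open>q' \<noteq> 0\<close>]
    by eventually_elim (simp add: rf_eval_quot_of_fract v v' R_def S_def diff_frac_eq)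
  ultimately show ?thesis
    by (simp add: landau_o.small.cong)
qed

lemma eq_if_rf_eval_diff_bigo:
  assumes "F \<le> at_infinity" "F \<noteq> bot" "rf_degree v + rf_degree v' < k"
    and "(\<lambda>z. rf_eval v z - rf_eval v' z) \<in> O[F](\<lambda>z. 1 / z ^ k)"
  shows "v = v'"
proof (rule ccontr)
  assume "v \<noteq> v'"
  then have "(\<lambda>z. 1 / z ^ k) \<in> o[F](\<lambda>z. rf_eval v z - rf_eval v' z)"
    using assms(1,3) by (intro landau_o.small.filter_mono[OF _ inverse_power_smallo_rf_eval_diff])
  then have "\<forall>\<^sub>F z in F. 1 / z ^ k = (0 :: complex)"
    using assms(4) by (rule landau_o.small_big_asymmetric)
  moreover have "\<forall>\<^sub>F z :: complex in F. z \<noteq> 0"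
    using assms(1) eventually_not_equal_at_infinity filter_leD by blast
  ultimately have "\<forall>\<^sub>F z in F. False"
    by eventually_elim simp
  with assms(2) show False
    by simp
qed

lemma quot_of_fract_divide_to_fract: "quot_of_fract (to_fract g / to_fract h) = normalize_quot (g, h)"
  by (simp add: quot_to_fract_def Fract_conv_to_fract flip: quot_of_fract_quot_to_fract)

lemma rf_degree_divide_to_fract_le:
  fixes g h :: "complex poly"
  assumes "h \<noteq> 0"
  shows "rf_degree (to_fract g / to_fract h) \<le> max (degree g) (degree h)"
proof -
  obtain d where "g = fst (normalize_quot (g, h)) * d" "h = snd (normalize_quot (g, h)) * d" "d \<noteq> 0"
    using normalize_quotE[OF assms] by metis
  then have "degree (fst (normalize_quot (g, h))) \<le> degree g"
    "degree (snd (normalize_quot (g, h))) \<le> degree h"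
    using degree_mult_right_le by metis+
  then show ?thesis
    unfolding rf_degree_def quot_of_fract_divide_to_fract case_prod_unfold by (rule max.mono)
qed

lemma eventually_rf_eval_divide_to_fract:
  fixes g h :: "complex poly"
  assumes "h \<noteq> 0"
  shows "\<forall>\<^sub>F z in at_infinity. rf_eval (to_fract g / to_fract h) z = poly g z / poly h z"
proof -
  obtain d where d: "g = fst (normalize_quot (g, h)) * d" "h = snd (normalize_quot (g, h)) * d" "d \<noteq> 0"
    using normalize_quotE[OF assms] by metis
  show ?thesis
    using eventually_poly_nonzero_at_infinity[OF \<open>d \<noteq> 0\<close>]
  proof eventually_elim
    case (elim z)
    have "poly g z / poly h z
        = poly (fst (normalize_quot (g, h))) z / poly (snd (normalize_quot (g, h))) z"
      using elim by (subst d(1), subst d(2)) simp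
    then show ?case
      by (simp add: rf_eval_quot_of_fract quot_of_fract_divide_to_fract)
  qed
qed

section \<open>Asymptotics of the approximants\<close>

context
  fixes a b :: "nat \<Rightarrow> complex"
  assumes a_nonzero: "\<And>k. k \<ge> 1 \<Longrightarrow> a k \<noteq> 0"
begin

lemma quot_of_fract_approximant: "quot_of_fract (approximant a b n) = (cf_num a b n, cf_den a b n)"
proof -
  have "approximant a b n = quot_to_fract (cf_num a b n, cf_den a b n)"
    by (simp add: approximant_eq_fract quot_to_fract_def Fract_conv_to_fract)
  moreover have "(cf_num a b n, cf_den a b n) \<in> normalized_fracts"
    using coprime_cf_num_den[of a b n, OF a_nonzero]
    by (simp add: normalized_fracts_def unit_factor_poly_def)
  ultimately show ?thesis
    by (simp add: quot_of_fract_quot_to_fract')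
qed

lemma rf_degree_approximant [simp]: "rf_degree (approximant a b n) = n"
  using degree_cf_num_le[of a b n] by (simp add: rf_degree_def quot_of_fract_approximant)

lemma rf_eval_approximant:
  "rf_eval (approximant a b n) z = poly (cf_num a b n) z / poly (cf_den a b n) z"
  by (simp add: rf_eval_def quot_of_fract_approximant)

abbreviation (input) "approx_eval n \<equiv> rf_eval (approximant a b n)"

lemma prod_a_nonzero: "(\<Prod>k=1..n. a k) \<noteq> 0"
  using a_nonzero by (simp add: prod_zero_iff)

lemma approximant_diff_asymp_equiv:
  "(\<lambda>z. approx_eval (Suc n) z - approx_eval n z)
     \<sim>[at_infinity] (\<lambda>z. (\<Prod>k=1..Suc n. a k) / z ^ (2 * n + 1))"
proof -
  have "\<forall>\<^sub>F z in at_infinity.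
      approx_eval (Suc n) z - approx_eval n z
      = (\<Prod>k=1..Suc n. a k) / (poly (cf_den a b (Suc n)) z * poly (cf_den a b n) z)"
    using eventually_poly_nonzero_at_infinity[OF cf_den_nonzero[of a b n]]
      eventually_poly_nonzero_at_infinity[OF cf_den_nonzero[of a b "Suc n"]]
    by eventually_elim (simp add: rf_eval_approximant diff_frac_eq poly_cf_num_den_det)
  then have "(\<lambda>z. approx_eval (Suc n) z - approx_eval n z) \<sim>[at_infinity]
      (\<lambda>z. (\<Prod>k=1..Suc n. a k) / (poly (cf_den a b (Suc n)) z * poly (cf_den a b n) z))"
    by (rule asymp_equiv_refl_ev)
  also have "\<dots> \<sim>[at_infinity] (\<lambda>z. (\<Prod>k=1..Suc n. a k) / (z ^ Suc n * z ^ n))"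
    by (intro asymp_equiv_intros poly_cf_den_asymp_equiv)
  also have "(\<lambda>z. (\<Prod>k=1..Suc n. a k) / (z ^ Suc n * z ^ n))
      = (\<lambda>z. (\<Prod>k=1..Suc n. a k) / z ^ (2 * n + 1))"
    by (simp add: mult_2 power_add mult.assoc)
  finally show ?thesis .
qed

lemma approximant_asymp_equiv:
  assumes "n \<ge> 1"
  shows "approx_eval n \<sim>[at_infinity] (\<lambda>z. a 1 / z)"
proof -
  have "a 1 \<noteq> 0"
    using a_nonzero by simp
  then have "cf_num a b n \<noteq> 0"
    using coeff_cf_num[OF assms, of a b] by auto
  have "(\<lambda>z. poly (cf_num a b n) z / poly (cf_den a b n) z)
      \<sim>[at_infinity] (\<lambda>z. (a 1 * z ^ (n - 1)) / z ^ n)"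
    using poly_asymp_equiv_at_infinity[OF \<open>cf_num a b n \<noteq> 0\<close>]
    unfolding degree_cf_num[of a n b, OF \<open>a 1 \<noteq> 0\<close> assms]
      coeff_cf_num[OF assms]
    by (rule asymp_equiv_divide[OF _ poly_cf_den_asymp_equiv])
  also have "\<dots> \<sim>[at_infinity] (\<lambda>z. a 1 / z)"
    using eventually_not_equal_at_infinity[of 0]
  proof (rule asymp_equiv_refl_ev[OF eventually_mono])
    fix z :: complex assume "z \<noteq> 0"
    moreover have "z ^ n = z ^ (n - 1) * z"
      using assms by (simp flip: power_Suc2)
    ultimately show "a 1 * z ^ (n - 1) / z ^ n = a 1 / z"
      by simp
  qed
  finally show ?thesis
    by (simp add: rf_eval_approximant [abs_def])
qed

lemma approximant_diff_bigo:
  "(\<lambda>z. approx_eval (Suc n) z - approx_eval n z) \<in> O[at_infinity](\<lambda>z. 1 / z ^ (2 * n + 1))"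
proof -
  have "(\<lambda>z. approx_eval (Suc n) z - approx_eval n z)
      \<in> O[at_infinity](\<lambda>z. (\<Prod>k=1..Suc n. a k) / z ^ (2 * n + 1))"
    by (rule asymp_equiv_imp_bigo[OF approximant_diff_asymp_equiv])
  also have "(\<lambda>z. (\<Prod>k=1..Suc n. a k) / z ^ (2 * n + 1)) \<in> O[at_infinity](\<lambda>z. 1 / z ^ (2 * n + 1))"
    by (rule divide_power_bigo) simp
  finally show ?thesis .
qed

lemma asymptotic_sequence_approximant_diff:
  assumes "F \<le> at_infinity"
  shows "asymptotic_sequence F (\<lambda>n z. approx_eval (Suc n) z - approx_eval n z)"
  unfolding asymptotic_sequence_def
proof
  fix n
  have "(\<lambda>z. approx_eval (Suc (Suc n)) z - approx_eval (Suc n) z)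
      \<in> O[at_infinity](\<lambda>z. (\<Prod>k=1..Suc (Suc n). a k) / z ^ (2 * Suc n + 1))"
    by (rule asymp_equiv_imp_bigo[OF approximant_diff_asymp_equiv])
  also have "(\<lambda>z. (\<Prod>k=1..Suc (Suc n). a k) / z ^ (2 * Suc n + 1))
      \<in> o[at_infinity](\<lambda>z. (\<Prod>k=1..Suc n. a k) / z ^ (2 * n + 1))"
    by (rule divide_power_smallo[OF _ prod_a_nonzero]) simp
  also have "(\<lambda>z. (\<Prod>k=1..Suc n. a k) / z ^ (2 * n + 1))
      \<in> O[at_infinity](\<lambda>z. approx_eval (Suc n) z - approx_eval n z)"
    by (rule asymp_equiv_imp_bigo[OF asymp_equiv_symI[OF approximant_diff_asymp_equiv]])
  finally show "(\<lambda>z. approx_eval (Suc (Suc n)) z - approx_eval (Suc n) z)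
      \<in> o[F](\<lambda>z. approx_eval (Suc n) z - approx_eval n z)"
    by (rule landau_o.small.filter_mono[OF assms])
qed

section \<open>The equivalent conditions\<close>

context
  fixes F :: "complex filter" and f :: "complex \<Rightarrow> complex"
  assumes F_le: "F \<le> at_infinity"
begin

lemma remainder_bigo_if_asymp_equiv:
  assumes "(\<lambda>z. f z - approx_eval n z) \<sim>[F] (\<lambda>z. c / z ^ (2 * n + 1))"
  shows "(\<lambda>z. f z - approx_eval n z) \<in> O[F](\<lambda>z. 1 / z ^ (2 * n + 1))"
proof -
  have "(\<lambda>z. f z - approx_eval n z) \<in> O[F](\<lambda>z. c / z ^ (2 * n + 1))"
    by (rule asymp_equiv_imp_bigo[OF assms])
  also have "(\<lambda>z. c / z ^ (2 * n + 1)) \<in> O[F](\<lambda>z. 1 / z ^ (2 * n + 1))"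
    by (rule landau_o.big.filter_mono[OF F_le divide_power_bigo]) simp
  finally show ?thesis .
qed

lemma remainder_asymp_equiv_if_bigo:
  assumes "(\<lambda>z. f z - approx_eval (Suc n) z) \<in> O[F](\<lambda>z. 1 / z ^ (2 * Suc n + 1))"
  shows "(\<lambda>z. f z - approx_eval n z) \<sim>[F] (\<lambda>z. (\<Prod>k=1..Suc n. a k) / z ^ (2 * n + 1))"
proof -
  note assms
  also have "(\<lambda>z. 1 / z ^ (2 * Suc n + 1)) \<in> o[F](\<lambda>z. (\<Prod>k=1..Suc n. a k) / z ^ (2 * n + 1))"
    by (rule landau_o.small.filter_mono[OF F_le divide_power_smallo[OF _ prod_a_nonzero]]) simp
  finally have small:
    "(\<lambda>z. f z - approx_eval (Suc n) z) \<in> o[F](\<lambda>z. (\<Prod>k=1..Suc n. a k) / z ^ (2 * n + 1))" .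
  have "(\<lambda>z. (f z - approx_eval (Suc n) z) + (approx_eval (Suc n) z - approx_eval n z))
      \<sim>[F] (\<lambda>z. (\<Prod>k=1..Suc n. a k) / z ^ (2 * n + 1))"
    by (rule iffD2[OF asymp_equiv_add_left[OF small]
          asymp_equiv_filter_mono[OF F_le approximant_diff_asymp_equiv]])
  then show ?thesis
    by simp
qed

lemma remainder_bigo_le:
  assumes "n \<le> N" "(\<lambda>z. f z - approx_eval N z) \<in> O[F](\<lambda>z. 1 / z ^ (2 * N + 1))"
  shows "(\<lambda>z. f z - approx_eval n z) \<in> O[F](\<lambda>z. 1 / z ^ (2 * n + 1))"
  using assms(1)
proof (induction rule: inc_induct)
  case base
  show ?case
    by (rule assms(2))
next
  case (step k)
  show ?case
    by (rule remainder_bigo_if_asymp_equiv[OF remainder_asymp_equiv_if_bigo[OF step.IH]])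
qed

lemma tendsto_0_if_asymp_equiv_divide: "g \<sim>[F] (\<lambda>z. c / z) \<Longrightarrow> (g \<longlongrightarrow> 0) F"
  using tendsto_mono[OF F_le tendsto_divide_power_0[of 1 c]]
  by (auto intro: asymp_equiv_tendsto_transfer[OF asymp_equiv_symI])

lemma acf_expansion_iff_remainder_bigo:
  "acf_expansion F f a b \<longleftrightarrow> (\<forall>n. (\<lambda>z. f z - approx_eval n z) \<in> O[F](\<lambda>z. 1 / z ^ (2 * n + 1)))"
proof
  assume "acf_expansion F f a b"
  then have "(\<lambda>z. f z - approx_eval n z) \<in> O[F](\<lambda>z. approx_eval (Suc n) z - approx_eval n z)" for n
    unfolding acf_expansion_def by blast
  then show "\<forall>n. (\<lambda>z. f z - approx_eval n z) \<in> O[F](\<lambda>z. 1 / z ^ (2 * n + 1))"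
    using landau_o.big.filter_mono[OF F_le approximant_diff_bigo] by (blast intro: landau_o.big_trans)
next
  assume remainder: "\<forall>n. (\<lambda>z. f z - approx_eval n z) \<in> O[F](\<lambda>z. 1 / z ^ (2 * n + 1))"
  have "(\<lambda>z. f z - approx_eval n z) \<in> O[F](\<lambda>z. approx_eval (Suc n) z - approx_eval n z)" for n
  proof -
    have "(\<lambda>z. f z - approx_eval n z) \<sim>[F] (\<lambda>z. (\<Prod>k=1..Suc n. a k) / z ^ (2 * n + 1))"
      using remainder by (intro remainder_asymp_equiv_if_bigo) blast
    also have "\<dots> \<sim>[F] (\<lambda>z. approx_eval (Suc n) z - approx_eval n z)"
      by (rule asymp_equiv_filter_mono[OF F_le asymp_equiv_symI[OF approximant_diff_asymp_equiv]])
    finally show ?thesis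
      by (rule asymp_equiv_imp_bigo)
  qed
  with asymptotic_sequence_approximant_diff[OF F_le] show "acf_expansion F f a b"
    unfolding acf_expansion_def by blast
qed

lemma remainder_asymp_equiv_iff_bigo:
  "(\<forall>n. (\<lambda>z. f z - approx_eval n z) \<sim>[F] (\<lambda>z. (\<Prod>k=1..n+1. a k) / z ^ (2 * n + 1)))
   \<longleftrightarrow> (\<forall>n. (\<lambda>z. f z - approx_eval n z) \<in> O[F](\<lambda>z. 1 / z ^ (2 * n + 1)))"
proof
  assume "\<forall>n. (\<lambda>z. f z - approx_eval n z) \<sim>[F] (\<lambda>z. (\<Prod>k=1..n+1. a k) / z ^ (2 * n + 1))"
  then show "\<forall>n. (\<lambda>z. f z - approx_eval n z) \<in> O[F](\<lambda>z. 1 / z ^ (2 * n + 1))"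
    using remainder_bigo_if_asymp_equiv by blast
next
  assume remainder: "\<forall>n. (\<lambda>z. f z - approx_eval n z) \<in> O[F](\<lambda>z. 1 / z ^ (2 * n + 1))"
  show "\<forall>n. (\<lambda>z. f z - approx_eval n z) \<sim>[F] (\<lambda>z. (\<Prod>k=1..n+1. a k) / z ^ (2 * n + 1))"
  proof
    fix n
    have "(\<lambda>z. f z - approx_eval (Suc n) z) \<in> O[F](\<lambda>z. 1 / z ^ (2 * Suc n + 1))"
      using remainder by blast
    then have "(\<lambda>z. f z - approx_eval n z) \<sim>[F] (\<lambda>z. (\<Prod>k=1..Suc n. a k) / z ^ (2 * n + 1))"
      by (rule remainder_asymp_equiv_if_bigo)
    then show "(\<lambda>z. f z - approx_eval n z) \<sim>[F] (\<lambda>z. (\<Prod>k=1..n+1. a k) / z ^ (2 * n + 1))"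
      by simp
  qed
qed

lemma infinite_remainder_bigo_iff:
  "infinite {n. (\<lambda>z. f z - approx_eval n z) \<in> O[F](\<lambda>z. 1 / z ^ (2 * n + 1))}
   \<longleftrightarrow> (\<forall>n. (\<lambda>z. f z - approx_eval n z) \<in> O[F](\<lambda>z. 1 / z ^ (2 * n + 1)))"
proof
  assume "infinite {n. (\<lambda>z. f z - approx_eval n z) \<in> O[F](\<lambda>z. 1 / z ^ (2 * n + 1))}"
  show "\<forall>n. (\<lambda>z. f z - approx_eval n z) \<in> O[F](\<lambda>z. 1 / z ^ (2 * n + 1))"
  proof
    fix n
    obtain N where "n \<le> N" "(\<lambda>z. f z - approx_eval N z) \<in> O[F](\<lambda>z. 1 / z ^ (2 * N + 1))"
      using \<open>infinite _\<close> unfolding infinite_nat_iff_unbounded_le by blast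
    then show "(\<lambda>z. f z - approx_eval n z) \<in> O[F](\<lambda>z. 1 / z ^ (2 * n + 1))"
      by (rule remainder_bigo_le)
  qed
qed simp


lemma remainder_asymp_equiv_if_tail:
  assumes g: "g \<sim>[F] (\<lambda>z. a (Suc (Suc m)) / z)"
    and f: "\<forall>\<^sub>F z in F. f z = cf_fun a b (Suc m) (g z) z"
  shows "(\<lambda>z. f z - approx_eval (Suc m) z) \<sim>[F] (\<lambda>z. (\<Prod>k=1..Suc (Suc m). a k) / z ^ (2 * Suc m + 1))"
proof -
  define p where "p = poly (cf_num a b (Suc m))"
  define q where "q = poly (cf_den a b (Suc m))"
  define p' where "p' = poly (cf_num a b m)"
  define q' where "q' = poly (cf_den a b m)"
  have "(g \<longlongrightarrow> 0) F"
    using g by (rule tendsto_0_if_asymp_equiv_divide)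
  have q_equiv: "q \<sim>[F] (\<lambda>z. z ^ Suc m)"
    unfolding q_def by (rule asymp_equiv_filter_mono[OF F_le poly_cf_den_asymp_equiv])
  have q_nonzero: "\<forall>\<^sub>F z in F. q z \<noteq> 0"
    unfolding q_def by (rule filter_leD[OF F_le eventually_poly_nonzero_at_infinity]) simp
  have "(\<lambda>z. q z - g z * q' z) \<sim>[F] q"
  proof (rule asymp_equivI')
    have "((\<lambda>z. 1 - g z * (q' z / q z)) \<longlongrightarrow> 1 - 0 * 0) F"
      unfolding q_def q'_def
      by (intro tendsto_intros \<open>(g \<longlongrightarrow> 0) F\<close> tendsto_mono[OF F_le poly_quotient_tendsto_0]) simp
    moreover have "\<forall>\<^sub>F z in F. 1 - g z * (q' z / q z) = (q z - g z * q' z) / q z"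
      using q_nonzero by eventually_elim (simp add: diff_divide_distrib)
    ultimately show "((\<lambda>z. (q z - g z * q' z) / q z) \<longlongrightarrow> 1) F"
      by (simp add: tendsto_cong)
  qed
  then have denom_equiv: "(\<lambda>z. q z - g z * q' z) \<sim>[F] (\<lambda>z. z ^ Suc m)"
    using q_equiv by (rule asymp_equiv_trans)
  have "\<forall>\<^sub>F z in F. q z - g z * q' z \<noteq> 0"
    using asymp_equiv_eventually_zeros[OF denom_equiv]
      filter_leD[OF F_le eventually_not_equal_at_infinity[of 0]]
    by eventually_elim simp
  with f q_nonzero eventually_cf_fun_eq[OF F_le \<open>(g \<longlongrightarrow> 0) F\<close>, of a b m]
  have "\<forall>\<^sub>F z in F. f z - approx_eval (Suc m) z = g z * (\<Prod>k=1..Suc m. a k) / (q z * (q z - g z * q' z))"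
  proof eventually_elim
    case (elim z)
    then have "f z - approx_eval (Suc m) z = (p z - g z * p' z) / (q z - g z * q' z) - p z / q z"
      by (simp add: rf_eval_approximant p_def q_def p'_def q'_def)
    also have "\<dots> = g z * (p z * q' z - p' z * q z) / (q z * (q z - g z * q' z))"
      using elim by (intro moebius_diff)
    finally show ?case
      by (simp add: p_def q_def p'_def q'_def poly_cf_num_den_det)
  qed
  then have "(\<lambda>z. f z - approx_eval (Suc m) z) \<sim>[F]
      (\<lambda>z. g z * (\<Prod>k=1..Suc m. a k) / (q z * (q z - g z * q' z)))"
    by (rule asymp_equiv_refl_ev)
  also have "\<dots> \<sim>[F] (\<lambda>z. (a (Suc (Suc m)) / z) * (\<Prod>k=1..Suc m. a k) / (z ^ Suc m * z ^ Suc m))"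
    by (intro asymp_equiv_intros g q_equiv denom_equiv)
  also have "\<dots> \<sim>[F] (\<lambda>z. (\<Prod>k=1..Suc (Suc m). a k) / z ^ (2 * Suc m + 1))"
    using filter_leD[OF F_le eventually_not_equal_at_infinity[of 0]]
  proof (rule asymp_equiv_refl_ev[OF eventually_mono])
    fix z :: complex assume "z \<noteq> 0"
    then show "(a (Suc (Suc m)) / z) * (\<Prod>k=1..Suc m. a k) / (z ^ Suc m * z ^ Suc m)
        = (\<Prod>k=1..Suc (Suc m). a k) / z ^ (2 * Suc m + 1)"
      by (simp add: prod.nat_ivl_Suc' field_simps power_add mult_2 mult_2_right)
  qed
  finally show ?thesis .
qed

lemma tail_if_remainder_asymp_equiv:
  assumes remainder: "(\<lambda>z. f z - approx_eval m z) \<sim>[F] (\<lambda>z. (\<Prod>k=1..Suc m. a k) / z ^ (2 * m + 1))"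
    and remainder_Suc:
      "(\<lambda>z. f z - approx_eval (Suc m) z) \<sim>[F] (\<lambda>z. (\<Prod>k=1..Suc (Suc m). a k) / z ^ (2 * Suc m + 1))"
  shows "\<exists>g. g \<sim>[F] (\<lambda>z. a (Suc (Suc m)) / z) \<and> (\<forall>\<^sub>F z in F. f z = cf_fun a b (Suc m) (g z) z)"
proof -
  define p where "p = poly (cf_num a b (Suc m))"
  define q where "q = poly (cf_den a b (Suc m))"
  define p' where "p' = poly (cf_num a b m)"
  define q' where "q' = poly (cf_den a b m)"
  \<comment> \<open>the inverse of the Moebius map t |-> (p - t p') / (q - t q') at f\<close>
  define g where "g z = (p z - f z * q z) / (p' z - f z * q' z)" for z
  have "\<forall>\<^sub>F z in F. z \<noteq> 0"
    by (rule filter_leD[OF F_le eventually_not_equal_at_infinity])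
  then have "\<forall>\<^sub>F z in F. f z - approx_eval m z \<noteq> 0"
    using asymp_equiv_eventually_zeros[OF remainder]
    by eventually_elim (use prod_a_nonzero[of "Suc m"] in simp)
  moreover have "\<forall>\<^sub>F z in F. q z \<noteq> 0" "\<forall>\<^sub>F z in F. q' z \<noteq> 0"
    unfolding q_def q'_def by (rule filter_leD[OF F_le eventually_poly_nonzero_at_infinity], simp)+
  ultimately have nonzero: "\<forall>\<^sub>F z in F. z \<noteq> 0 \<and> q z \<noteq> 0 \<and> q' z \<noteq> 0 \<and> f z - approx_eval m z \<noteq> 0"
    using \<open>\<forall>\<^sub>F z in F. z \<noteq> 0\<close> by eventually_elim blast
  have "(\<lambda>z. q z * (f z - approx_eval (Suc m) z) / (q' z * (f z - approx_eval m z))) \<sim>[F]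
      (\<lambda>z. z ^ Suc m * ((\<Prod>k=1..Suc (Suc m). a k) / z ^ (2 * Suc m + 1))
        / (z ^ m * ((\<Prod>k=1..Suc m. a k) / z ^ (2 * m + 1))))"
    unfolding q_def q'_def
    by (intro asymp_equiv_intros asymp_equiv_filter_mono[OF F_le poly_cf_den_asymp_equiv]
        remainder remainder_Suc)
  also have "\<dots> \<sim>[F] (\<lambda>z. a (Suc (Suc m)) / z)"
    using \<open>\<forall>\<^sub>F z in F. z \<noteq> 0\<close>
  proof (rule asymp_equiv_refl_ev[OF eventually_mono])
    fix z :: complex assume "z \<noteq> 0"
    with prod_a_nonzero[of "Suc m"] show "z ^ Suc m * ((\<Prod>k=1..Suc (Suc m). a k) / z ^ (2 * Suc m + 1))
        / (z ^ m * ((\<Prod>k=1..Suc m. a k) / z ^ (2 * m + 1))) = a (Suc (Suc m)) / z"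
      by (simp add: prod.nat_ivl_Suc' field_simps power_add mult_2 mult_2_right)
  qed
  finally have quotient_equiv:
    "(\<lambda>z. q z * (f z - approx_eval (Suc m) z) / (q' z * (f z - approx_eval m z)))
      \<sim>[F] (\<lambda>z. a (Suc (Suc m)) / z)" .
  have "\<forall>\<^sub>F z in F. g z = q z * (f z - approx_eval (Suc m) z) / (q' z * (f z - approx_eval m z))"
    using nonzero
  proof eventually_elim
    case (elim z)
    then have "p z - f z * q z = - (q z * (f z - approx_eval (Suc m) z))"
      "p' z - f z * q' z = - (q' z * (f z - approx_eval m z))"
      by (simp_all add: rf_eval_approximant p_def q_def p'_def q'_def field_simps)
    then show ?case
      by (simp add: g_def)
  qed
  then have g: "g \<sim>[F] (\<lambda>z. a (Suc (Suc m)) / z)"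
    by (rule asymp_equiv_trans[OF asymp_equiv_refl_ev quotient_equiv])
  have "\<forall>\<^sub>F z in F. f z = cf_fun a b (Suc m) (g z) z"
    using nonzero eventually_cf_fun_eq[OF F_le tendsto_0_if_asymp_equiv_divide[OF g], of a b m]
  proof eventually_elim
    case (elim z)
    have "p' z - f z * q' z = - (q' z * (f z - approx_eval m z))"
      using elim by (simp add: rf_eval_approximant p'_def q'_def field_simps)
    moreover have "p z * q' z - p' z * q z = (\<Prod>k=1..Suc m. a k)"
      unfolding p_def q_def p'_def q'_def by (rule poly_cf_num_den_det)
    ultimately have "(p z - g z * p' z) / (q z - g z * q' z) = f z"
      using elim prod_a_nonzero[of "Suc m"] unfolding g_def by (intro moebius_inverse) simp_all
    with elim show ?case
      by (simp add: p_def q_def p'_def q'_def)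
  qed
  with g show ?thesis
    by blast
qed

lemma tail_expansion_iff_remainder_bigo:
  "(\<forall>n\<ge>1. \<exists>g. (g \<sim>[F] (\<lambda>z. a (n+1) / z)) \<and> (\<forall>\<^sub>F z in F. f z = cf_fun a b n (g z) z))
   \<longleftrightarrow> (\<forall>n. (\<lambda>z. f z - approx_eval n z) \<in> O[F](\<lambda>z. 1 / z ^ (2 * n + 1)))"
proof
  assume tail: "\<forall>n\<ge>1. \<exists>g. (g \<sim>[F] (\<lambda>z. a (n+1) / z)) \<and> (\<forall>\<^sub>F z in F. f z = cf_fun a b n (g z) z)"
  have "(\<lambda>z. f z - approx_eval (Suc m) z) \<in> O[F](\<lambda>z. 1 / z ^ (2 * Suc m + 1))" for m
  proof -
    obtain g where "g \<sim>[F] (\<lambda>z. a (Suc (Suc m)) / z)" "\<forall>\<^sub>F z in F. f z = cf_fun a b (Suc m) (g z) z"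
      using tail[rule_format, of "Suc m"] by auto
    then show ?thesis
      by (rule remainder_bigo_if_asymp_equiv[OF remainder_asymp_equiv_if_tail])
  qed
  then show "\<forall>n. (\<lambda>z. f z - approx_eval n z) \<in> O[F](\<lambda>z. 1 / z ^ (2 * n + 1))"
    using remainder_bigo_le[OF le_SucI[OF order_refl]] by blast
next
  assume "\<forall>n. (\<lambda>z. f z - approx_eval n z) \<in> O[F](\<lambda>z. 1 / z ^ (2 * n + 1))"
  then have remainder:
    "(\<lambda>z. f z - approx_eval n z) \<sim>[F] (\<lambda>z. (\<Prod>k=1..Suc n. a k) / z ^ (2 * n + 1))" for n
    by (intro remainder_asymp_equiv_if_bigo) blast
  show "\<forall>n\<ge>1. \<exists>g. (g \<sim>[F] (\<lambda>z. a (n+1) / z)) \<and> (\<forall>\<^sub>F z in F. f z = cf_fun a b n (g z) z)"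
  proof (intro allI impI)
    fix n :: nat assume "n \<ge> 1"
    then obtain m where "n = Suc m"
      using not0_implies_Suc by fastforce
    then show "\<exists>g. (g \<sim>[F] (\<lambda>z. a (n+1) / z)) \<and> (\<forall>\<^sub>F z in F. f z = cf_fun a b n (g z) z)"
      using tail_if_remainder_asymp_equiv[OF remainder remainder] by simp
  qed
qed


context
  assumes F_nontrivial: "F \<noteq> bot"
begin

lemma eq_approximant_if_remainder_bigo:
  assumes "(\<lambda>z. f z - approx_eval n z) \<in> O[F](\<lambda>z. 1 / z ^ (2 * n + 1))"
    and "rf_degree v \<le> n" "(\<lambda>z. f z - rf_eval v z) \<in> O[F](\<lambda>z. 1 / z ^ (2 * n + 1))"
  shows "v = approximant a b n"
proof (rule eq_if_rf_eval_diff_bigo[OF F_le F_nontrivial])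
  show "rf_degree v + rf_degree (approximant a b n) < 2 * n + 1"
    using assms(2) by simp
  have "(\<lambda>z. (f z - approx_eval n z) - (f z - rf_eval v z)) \<in> O[F](\<lambda>z. 1 / z ^ (2 * n + 1))"
    using assms(1,3) by (rule sum_in_bigo(2))
  then show "(\<lambda>z. rf_eval v z - approx_eval n z) \<in> O[F](\<lambda>z. 1 / z ^ (2 * n + 1))"
    by simp
qed

lemma low_degree_approximations_iff_remainder_bigo:
  "(\<forall>n. {v. rf_degree v \<le> n \<and> (\<lambda>z. f z - rf_eval v z) \<in> O[F](\<lambda>z. 1 / z ^ (2 * n + 1))}
        = {approximant a b n})
   \<longleftrightarrow> (\<forall>n. (\<lambda>z. f z - approx_eval n z) \<in> O[F](\<lambda>z. 1 / z ^ (2 * n + 1)))"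
proof
  assume "\<forall>n. {v. rf_degree v \<le> n \<and> (\<lambda>z. f z - rf_eval v z) \<in> O[F](\<lambda>z. 1 / z ^ (2 * n + 1))}
      = {approximant a b n}"
  then have "approximant a b n
      \<in> {v. rf_degree v \<le> n \<and> (\<lambda>z. f z - rf_eval v z) \<in> O[F](\<lambda>z. 1 / z ^ (2 * n + 1))}" for n
    by blast
  then show "\<forall>n. (\<lambda>z. f z - approx_eval n z) \<in> O[F](\<lambda>z. 1 / z ^ (2 * n + 1))"
    by blast
next
  assume remainder: "\<forall>n. (\<lambda>z. f z - approx_eval n z) \<in> O[F](\<lambda>z. 1 / z ^ (2 * n + 1))"
  then show "\<forall>n. {v. rf_degree v \<le> n \<and> (\<lambda>z. f z - rf_eval v z) \<in> O[F](\<lambda>z. 1 / z ^ (2 * n + 1))}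
      = {approximant a b n}"
    using eq_approximant_if_remainder_bigo by auto
qed

lemma pade_candidates_iff_remainder_bigo:
  "(\<forall>n\<ge>1. pade_candidates F f n = {approximant a b n})
   \<longleftrightarrow> (\<forall>n. (\<lambda>z. f z - approx_eval n z) \<in> O[F](\<lambda>z. 1 / z ^ (2 * n + 1)))"
proof
  assume pade: "\<forall>n\<ge>1. pade_candidates F f n = {approximant a b n}"
  have "(\<lambda>z. f z - approx_eval (Suc n) z) \<in> O[F](\<lambda>z. 1 / z ^ (2 * Suc n + 1))" for n
  proof -
    have "approximant a b (Suc n) \<in> pade_candidates F f (Suc n)"
      using pade by simp
    then obtain g h where approx: "approximant a b (Suc n) = to_fract g / to_fract h" and "h \<noteq> 0"
      and bigo: "(\<lambda>z. f z - poly g z / poly h z) \<in> O[F](\<lambda>z. 1 / z ^ (2 * Suc n + 1))"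
      unfolding pade_candidates_def by blast
    have "\<forall>\<^sub>F z in F. f z - poly g z / poly h z = f z - approx_eval (Suc n) z"
      using filter_leD[OF F_le eventually_rf_eval_divide_to_fract[OF \<open>h \<noteq> 0\<close>, of g]]
      by eventually_elim (simp add: approx)
    with bigo show ?thesis
      by (simp add: landau_o.big.in_cong)
  qed
  then show "\<forall>n. (\<lambda>z. f z - approx_eval n z) \<in> O[F](\<lambda>z. 1 / z ^ (2 * n + 1))"
    using remainder_bigo_le[OF le_SucI[OF order_refl]] by blast
next
  assume remainder: "\<forall>n. (\<lambda>z. f z - approx_eval n z) \<in> O[F](\<lambda>z. 1 / z ^ (2 * n + 1))"
  show "\<forall>n\<ge>1. pade_candidates F f n = {approximant a b n}"
  proof (intro allI impI equalityI subsetI)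
    fix n v assume "n \<ge> 1" "v \<in> pade_candidates F f n"
    then obtain g h where v: "v = to_fract g / to_fract h" and "h \<noteq> 0"
      and degree: "degree g \<le> n - 1" "degree h \<le> n"
      and bigo: "(\<lambda>z. f z - poly g z / poly h z) \<in> O[F](\<lambda>z. 1 / z ^ (2 * n + 1))"
      unfolding pade_candidates_def by blast
    have "rf_degree v \<le> n"
      using rf_degree_divide_to_fract_le[OF \<open>h \<noteq> 0\<close>, of g] degree by (simp add: v)
    moreover have "\<forall>\<^sub>F z in F. f z - poly g z / poly h z = f z - rf_eval v z"
      using filter_leD[OF F_le eventually_rf_eval_divide_to_fract[OF \<open>h \<noteq> 0\<close>, of g]]
      by eventually_elim (simp add: v)
    with bigo have "(\<lambda>z. f z - rf_eval v z) \<in> O[F](\<lambda>z. 1 / z ^ (2 * n + 1))"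
      by (simp add: landau_o.big.in_cong)
    ultimately show "v \<in> {approximant a b n}"
      using eq_approximant_if_remainder_bigo remainder by blast
  next
    fix n v assume "n \<ge> 1" "v \<in> {approximant a b n}"
    then have "v = to_fract (cf_num a b n) / to_fract (cf_den a b n)"
      by (simp add: approximant_eq_fract)
    moreover have "(\<lambda>z. f z - poly (cf_num a b n) z / poly (cf_den a b n) z)
        \<in> O[F](\<lambda>z. 1 / z ^ (2 * n + 1))"
      using remainder by (simp add: rf_eval_approximant)
    ultimately show "v \<in> pade_candidates F f n"
      unfolding pade_candidates_def using degree_cf_num_le[of a b n]
      by (intro CollectI exI[of _ "cf_num a b n"] exI[of _ "cf_den a b n"]) auto
  qed
qed

lemma best_rat_approx_set_eq_range_approximant:
  assumes remainder: "\<forall>n. (\<lambda>z. f z - approx_eval n z) \<in> O[F](\<lambda>z. 1 / z ^ (2 * n + 1))"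
  shows "{v. best_rat_approx F f v} = range (approximant a b)"
proof (intro equalityI subsetI)
  fix v assume "v \<in> {v. best_rat_approx F f v}"
  then have best: "best_rat_approx F f v"
    by simp
  define m where "m = rf_degree v"
  have "approximant a b m = v"
  proof (rule ccontr)
    assume ne: "approximant a b m \<noteq> v"
    have "(\<lambda>z. f z - approx_eval m z) \<in> O[F](\<lambda>z. 1 / z ^ (2 * m + 1))"
      using remainder by blast
    also have "(\<lambda>z. 1 / z ^ (2 * m + 1)) \<in> o[F](\<lambda>z. approx_eval m z - rf_eval v z)"
      using ne by (intro landau_o.small.filter_mono[OF F_le inverse_power_smallo_rf_eval_diff])
        (simp_all add: m_def)
    finally have small: "(\<lambda>z. f z - approx_eval m z) \<in> o[F](\<lambda>z. approx_eval m z - rf_eval v z)" .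
    then have "(\<lambda>z. (f z - approx_eval m z) + (approx_eval m z - rf_eval v z))
        \<sim>[F] (\<lambda>z. approx_eval m z - rf_eval v z)"
      by (rule iffD2[OF asymp_equiv_add_left asymp_equiv_refl])
    then have "(\<lambda>z. approx_eval m z - rf_eval v z) \<in> O[F](\<lambda>z. f z - rf_eval v z)"
      by (simp add: asymp_equiv_imp_bigo asymp_equiv_sym)
    with small have "(\<lambda>z. f z - approx_eval m z) \<in> O[F](\<lambda>z. f z - rf_eval v z)"
      by (rule landau_o.small_big_trans')
    moreover have "rf_degree (approximant a b m) \<le> rf_degree v"
      by (simp add: m_def)
    ultimately have "approximant a b m = v"
      using best unfolding best_rat_approx_def by blast
    with ne show False ..
  qed
  then show "v \<in> range (approximant a b)"
    by (metis rangeI)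
next
  fix v assume "v \<in> range (approximant a b)"
  then obtain n where v: "v = approximant a b n"
    by blast
  have "best_rat_approx F f (approximant a b n)"
    unfolding best_rat_approx_def
  proof (intro allI iffI)
    fix u assume "rf_degree u \<le> rf_degree (approximant a b n)
      \<and> (\<lambda>z. f z - rf_eval u z) \<in> O[F](\<lambda>z. f z - approx_eval n z)"
    then have "rf_degree u \<le> n" and "(\<lambda>z. f z - rf_eval u z) \<in> O[F](\<lambda>z. f z - approx_eval n z)"
      by simp_all
    moreover from this(2) have "(\<lambda>z. f z - rf_eval u z) \<in> O[F](\<lambda>z. 1 / z ^ (2 * n + 1))"
      using remainder by (blast intro: landau_o.big_trans)
    ultimately show "u = approximant a b n"
      using eq_approximant_if_remainder_bigo remainder by blast
  qed simp
  then show "v \<in> {v. best_rat_approx F f v}"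
    by (simp add: v)
qed

end

end

end

theorem theorem4p1:
  fixes a b :: "nat \<Rightarrow> complex"
  assumes a_nz: "\<And>n. n \<ge> 1 \<Longrightarrow> a n \<noteq> 0"
  defines "w \<equiv> approximant a b"
  shows
    \<comment> \<open>(1)\<close>
    "(\<forall>n. rf_degree (w n) = n)
   \<and> (\<forall>n\<ge>1. (rf_eval (w n)) \<sim>[at_infinity] (\<lambda>z. a 1 / z))
   \<and> (\<forall>n\<ge>1. (\<lambda>z. rf_eval (w n) z - rf_eval (w (n-1)) z)
               \<sim>[at_infinity] (\<lambda>z. (\<Prod>k=1..n. a k) / z ^ (2*n-1)))
   \<and> asymptotic_sequence at_infinity (\<lambda>n z. rf_eval (w (Suc n)) z - rf_eval (w n) z)
   \<and>
    \<comment> \<open>(2) and (3)\<close>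
    (\<forall>(X :: complex set) (f :: complex \<Rightarrow> complex). \<not> bounded X \<longrightarrow>
      (let F = at_inf_within X;
           A = acf_expansion F f a b;
           B = (\<forall>n\<ge>1. \<exists>g. (g \<sim>[F] (\<lambda>z. a (n+1) / z))
                        \<and> (\<forall>\<^sub>F z in F. f z = cf_fun a b n (g z) z));
           C = (\<forall>n. (\<lambda>z. f z - rf_eval (w n) z)
                       \<sim>[F] (\<lambda>z. (\<Prod>k=1..n+1. a k) / z ^ (2*n+1)));
           D = (\<forall>n. (\<lambda>z. f z - rf_eval (w n) z) \<in> O[F](\<lambda>z. 1 / z ^ (2*n+1)));
           E = (infinite {n. (\<lambda>z. f z - rf_eval (w n) z) \<in> O[F](\<lambda>z. 1 / z ^ (2*n+1))});
           G = (\<forall>n. {v. rf_degree v \<le> n \<and>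
                         (\<lambda>z. f z - rf_eval v z) \<in> O[F](\<lambda>z. 1 / z ^ (2*n+1))} = {w n});
           H = (\<forall>n\<ge>1. pade_candidates F f n = {w n})
       in (A \<longleftrightarrow> B) \<and> (A \<longleftrightarrow> C) \<and> (A \<longleftrightarrow> D) \<and> (A \<longleftrightarrow> E)
          \<and> (A \<longleftrightarrow> G) \<and> (A \<longleftrightarrow> H)
          \<and> (A \<longrightarrow> {v. best_rat_approx F f v} = range w)))"
proof -
  have F: "at_inf_within X \<le> at_infinity" "at_inf_within X \<noteq> bot" if "\<not> bounded X" for X
    using at_inf_within_le_at_infinity at_inf_within_nontrivial[OF that] by simp_all
  have diff: "(\<lambda>z. rf_eval (w n) z - rf_eval (w (n - 1)) z)
      \<sim>[at_infinity] (\<lambda>z. (\<Prod>k=1..n. a k) / z ^ (2 * n - 1))" if "n \<ge> 1" for n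
    using that approximant_diff_asymp_equiv[where a = a, OF a_nz, of b "n - 1"]
    unfolding w_def by (cases n) simp_all
  \<comment> \<open>each condition of (2) is rewritten to (d)\<close>
  show ?thesis
    unfolding Let_def w_def
    by (intro conjI allI impI)
      (simp_all only: diff[unfolded w_def] simp_thms
        rf_degree_approximant[where a = a, OF a_nz] approximant_asymp_equiv[where a = a, OF a_nz]
        asymptotic_sequence_approximant_diff[where a = a, OF a_nz order_refl]
        acf_expansion_iff_remainder_bigo[where a = a, OF a_nz F(1)]
        tail_expansion_iff_remainder_bigo[where a = a, OF a_nz F(1)]
        remainder_asymp_equiv_iff_bigo[where a = a, OF a_nz F(1)]
        infinite_remainder_bigo_iff[where a = a, OF a_nz F(1)]
        low_degree_approximations_iff_remainder_bigo[where a = a, OF a_nz F]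
        pade_candidates_iff_remainder_bigo[where a = a, OF a_nz F]
        best_rat_approx_set_eq_range_approximant[where a = a, OF a_nz F])
qed

end
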